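(* Let $n=2^k$ for an integer $k\ge1$ and $\omega_n=e^{2\pi i/n}$. Define $$A_{n}=\{\Re(\omega_n^t):t\in\mathbb{Z},\ 0\le t<2^{k-2}\},\qquad B_{n}=\{i\,\Im(\omega_n^t):t\in\mathbb{Z},\ 0<t\le 2^{k-2}\}.$$ Then $A_n\cup B_n$ is a basis for $\mathbb{Q}(\omega_n)$ over $\mathbb{Q}$. Moreover, for every integer $t$, all coordinates of $\Re(\omega_n^t)$ and of $i\,\Im(\omega_n^t)$ with respect to this basis lie in $\{-1,0,1\}$.
   Context: $\Re$ and $\Im$ denote real and imaginary parts. *)

theory Defs
  imports Complex_Main
begin

definition is_subfield :: "complex set \<Rightarrow> bool" where
  "is_subfield S \<longleftrightarrow> 0 \<in> S \<and> 1 \<in> S \<and>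
     (\<forall>x\<in>S. \<forall>y\<in>S. x + y \<in> S \<and> x - y \<in> S \<and> x * y \<in> S) \<and>
     (\<forall>x\<in>S. x \<noteq> 0 \<longrightarrow> inverse x \<in> S)"

definition rat_adjoin :: "complex \<Rightarrow> complex set" where
  "rat_adjoin a = \<Inter>{S. is_subfield S \<and> a \<in> S}"

definition rat_span :: "complex set \<Rightarrow> complex set" where
  "rat_span X = {\<Sum>x\<in>X. of_rat (c x) * x | c. True}"

definition rat_independent :: "complex set \<Rightarrow> bool" where
  "rat_independent X \<longleftrightarrow>
     (\<forall>c :: complex \<Rightarrow> rat. (\<Sum>x\<in>X. of_rat (c x) * x) = 0 \<longrightarrow> (\<forall>x\<in>X. c x = 0))"

definition rat_basis_of :: "complex set \<Rightarrow> complex set \<Rightarrow> bool" where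
  "rat_basis_of X V \<longleftrightarrow> finite X \<and> X \<subseteq> V \<and> rat_independent X \<and> rat_span X = V"

definition omega :: "nat \<Rightarrow> complex" where
  "omega n = exp (2 * of_real pi * \<i> / of_nat n)"

text \<open>A_n = {Re(w^t) : 0 <= t < 2^(k-2)},  B_n = {i Im(w^t) : 0 < t <= 2^(k-2)}
  (the bounds written as 4t < 2^k and 0 < 4t <= 2^k to allow k = 1).\<close>
definition A_set :: "nat \<Rightarrow> complex set" where
  "A_set k = {complex_of_real (Re (omega (2^k) powi t)) | t :: int. 0 \<le> t \<and> 4 * t < 2^k}"

definition B_set :: "nat \<Rightarrow> complex set" where
  "B_set k = {\<i> * complex_of_real (Im (omega (2^k) powi t)) | t :: int. 0 < t \<and> 4 * t \<le> 2^k}"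

end

theory Submission
  imports Defs "Berlekamp_Zassenhaus.Factor_Bound"
begin

(* Write n = 2^k and m = 2^(k-1). The root of unity w = omega n is a root of X^m + 1, which is
   irreducible over Q: substituting X + 1 for X turns it into (X + 1)^m + 1, an Eisenstein
   polynomial at 2 since all inner binomial coefficients of a power of 2 are even. Hence
   Q(w) = Q[w] has the basis 1, w, ..., w^(m-1).
   The reflections t -> n - t and t -> m - t send w^t to its conjugate and to minus its
   conjugate, so every Re(w^t) and i Im(w^t) is 0 or plus or minus an element of A_n u B_n.
   Thus A_n u B_n spans Q(w), and as it has at most m elements it is a basis. *)

lemma eisenstein_degree_eq_0:
  fixes g h :: "int poly" and p :: int
  assumes p: "prime p"
    and g0: "p dvd coeff g 0" and h0: "\<not> p dvd coeff h 0"
    and below: "\<And>j. j < degree (g * h) \<Longrightarrow> p dvd coeff (g * h) j"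
    and lead: "\<not> p dvd lead_coeff (g * h)"
  shows "degree h = 0"
proof (rule ccontr)
  assume "degree h \<noteq> 0"
  have "g \<noteq> 0" "h \<noteq> 0" using lead by auto
  have "\<not> p dvd lead_coeff g" using lead by (metis dvd_mult2 lead_coeff_mult)
  \<comment> \<open>the first coefficient of \<open>g\<close> not divisible by \<open>p\<close> yields one of \<open>g * h\<close> below its degree\<close>
  define i where "i = (LEAST i. \<not> p dvd coeff g i)"
  have gi: "\<not> p dvd coeff g i"
    unfolding i_def by (rule LeastI) (fact \<open>\<not> p dvd lead_coeff g\<close>)
  have "i \<le> degree g"
    unfolding i_def by (rule Least_le) (fact \<open>\<not> p dvd lead_coeff g\<close>)
  hence "i < degree (g * h)"
    using \<open>degree h \<noteq> 0\<close> \<open>g \<noteq> 0\<close> \<open>h \<noteq> 0\<close> by (simp add: degree_mult_eq)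
  have below_i: "p dvd coeff g a" if "a < i" for a
    using not_less_Least[OF that[unfolded i_def]] by simp
  have "coeff (g * h) i = (\<Sum>a\<le>i. coeff g a * coeff h (i - a))" by (rule coeff_mult)
  also have "\<dots> = (\<Sum>a<i. coeff g a * coeff h (i - a)) + coeff g i * coeff h 0"
    by (simp add: lessThan_Suc_atMost[symmetric])
  finally have "coeff (g * h) i = (\<Sum>a<i. coeff g a * coeff h (i - a)) + coeff g i * coeff h 0" .
  moreover have "p dvd (\<Sum>a<i. coeff g a * coeff h (i - a))"
    by (intro dvd_sum dvd_mult2 below_i) simp
  moreover have "\<not> p dvd coeff g i * coeff h 0"
    using p gi h0 by (simp add: prime_dvd_mult_iff)
  ultimately have "\<not> p dvd coeff (g * h) i"
    by (simp add: dvd_add_right_iff)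
  with below \<open>i < degree (g * h)\<close> show False by blast
qed

lemma eisenstein_factor_degree_eq_0:
  fixes g h :: "int poly" and p :: int
  assumes p: "prime p"
    and below: "\<And>j. j < degree (g * h) \<Longrightarrow> p dvd coeff (g * h) j"
    and lead: "\<not> p dvd lead_coeff (g * h)"
    and const: "\<not> p\<^sup>2 dvd coeff (g * h) 0"
  shows "degree g = 0 \<or> degree h = 0"
proof (cases "degree (g * h) = 0")
  case True
  moreover have "g \<noteq> 0" "h \<noteq> 0" using lead by auto
  ultimately show ?thesis by (simp add: degree_mult_eq)
next
  case False
  hence "p dvd coeff g 0 * coeff h 0" using below[of 0] by (simp add: coeff_mult_0)
  moreover have "\<not> (p dvd coeff g 0 \<and> p dvd coeff h 0)"
    using const by (auto simp: coeff_mult_0 power2_eq_square mult_dvd_mono)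
  ultimately consider "p dvd coeff g 0" "\<not> p dvd coeff h 0" | "p dvd coeff h 0" "\<not> p dvd coeff g 0"
    using p by (auto simp: prime_dvd_mult_iff)
  thus ?thesis
  proof cases
    case 1 thus ?thesis using eisenstein_degree_eq_0[of p g h] p below lead by simp
  next
    case 2 thus ?thesis using eisenstein_degree_eq_0[of p h g] p below lead by (simp add: mult.commute)
  qed
qed

lemma irreducible_of_int_poly_eisenstein:
  fixes f :: "int poly" and p :: int
  assumes p: "prime p" and deg: "degree f > 0"
    and below: "\<And>j. j < degree f \<Longrightarrow> p dvd coeff f j"
    and lead: "\<not> p dvd lead_coeff f"
    and const: "\<not> p\<^sup>2 dvd coeff f 0"
  shows "irreducible (of_int_poly f :: rat poly)"
proof (rule irreducibleI)
  have deg': "degree (of_int_poly f :: rat poly) > 0" using deg by simp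
  thus "of_int_poly f \<noteq> (0 :: rat poly)" "\<not> is_unit (of_int_poly f :: rat poly)"
    by (auto simp: is_unit_iff_degree)
  fix a b :: "rat poly" assume ab: "of_int_poly f = a * b"
  then obtain g h where "f = g * h" "degree g = degree a" "degree h = degree b"
    using rat_to_int_factor by blast
  hence "degree a = 0 \<or> degree b = 0"
    using eisenstein_factor_degree_eq_0[of p g h] p below lead const by simp
  moreover have "a \<noteq> 0" "b \<noteq> 0" using ab deg' by auto
  ultimately show "is_unit a \<or> is_unit b" by (auto simp: is_unit_iff_degree)
qed

lemma irreducible_pcompose_degree_1:
  fixes p q :: "'a :: field poly"
  assumes "degree q = 1" and "irreducible (p \<circ>\<^sub>p q)"
  shows "irreducible p"
proof (rule irreducibleI)
  have deg: "degree (r \<circ>\<^sub>p q) = degree r" for r using assms(1) by simp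
  show "p \<noteq> 0" using assms(2) by auto
  show "\<not> is_unit p"
    using assms(2) deg[of p] by (auto simp: is_unit_iff_degree irreducible_def)
  fix a b assume "p = a * b"
  hence "irreducible ((a \<circ>\<^sub>p q) * (b \<circ>\<^sub>p q))" using assms(2) by (simp add: pcompose_mult)
  hence "is_unit (a \<circ>\<^sub>p q) \<or> is_unit (b \<circ>\<^sub>p q)" by (meson irreducibleD)
  moreover have "a \<noteq> 0" "b \<noteq> 0" using \<open>p = a * b\<close> \<open>p \<noteq> 0\<close> by auto
  ultimately show "is_unit a \<or> is_unit b" using deg by (auto simp: is_unit_iff_degree)
qed

lemma even_binomial_pow2:
  assumes "0 < j" "j < 2 ^ s"
  shows "even ((2 ^ s) choose j)"
proof (rule ccontr)
  assume odd: "odd ((2::nat) ^ s choose j)"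
  have "j * (2 ^ s choose j) = 2 ^ s * ((2 ^ s - 1) choose (j - 1))"
    using assms(1) by (rule times_binomial_minus1_eq)
  hence "(2::nat) ^ s dvd j * (2 ^ s choose j)" by simp
  hence "(2::nat) ^ s dvd j" using odd by (simp add: coprime_dvd_mult_left_iff)
  with assms show False by (simp add: nat_dvd_not_less)
qed

lemma irreducible_X_pow2_plus_1: "irreducible (monom 1 (2 ^ s) + 1 :: rat poly)"
proof (rule irreducible_pcompose_degree_1)
  define E :: "int poly" where "E = [:1, 1:] ^ 2 ^ s + 1"
  have coeff_E: "coeff E j = int (2 ^ s choose j) + of_bool (j = 0)" if "j \<le> 2 ^ s" for j
    using that coeff_linear_poly_power[of j "2 ^ s" "1::int" 1] by (simp add: E_def)
  have "degree ([:1, 1:] ^ 2 ^ s :: int poly) = 2 ^ s" by (rule degree_linear_power)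
  hence deg: "degree E = 2 ^ s" unfolding E_def by (subst degree_add_eq_left) simp_all
  have "coeff E 0 = 2" "lead_coeff E = 1" using coeff_E[of 0] coeff_E[of "2 ^ s"] by (simp_all add: deg)
  moreover have "2 dvd coeff E j" if "j < degree E" for j
  proof (cases "j = 0")
    case False thus ?thesis using coeff_E[of j] even_binomial_pow2[of j s] that deg by simp
  qed (simp add: \<open>coeff E 0 = 2\<close>)
  ultimately have "irreducible (of_int_poly E :: rat poly)"
    by (intro irreducible_of_int_poly_eisenstein[of 2]) (simp_all add: deg)
  moreover have "(monom 1 (2 ^ s) + 1) \<circ>\<^sub>p [:1, 1 :: rat:] = [:1, 1:] ^ 2 ^ s + 1"
    by (simp add: pcompose_add monom_altdef pcompose_hom.hom_power pcompose_smult)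
  moreover have "of_int_poly E = [:1, 1 :: rat:] ^ 2 ^ s + 1"
    by (simp add: E_def hom_distribs)
  ultimately show "irreducible ((monom 1 (2 ^ s) + 1) \<circ>\<^sub>p [:1, 1 :: rat:])" by (simp only:)
qed simp

interpretation rat_vs: vector_space "\<lambda>(r :: rat) (x :: complex). of_rat r * x"
  by unfold_locales (simp_all add: algebra_simps of_rat_add of_rat_mult)

lemma rat_span_eq_span: "finite X \<Longrightarrow> rat_span X = rat_vs.span X"
  by (simp add: rat_vs.span_finite rat_span_def full_SetCompr_eq)

lemma rat_independent_iff_independent: "finite X \<Longrightarrow> rat_independent X \<longleftrightarrow> rat_vs.independent X"
  by (simp add: rat_vs.dependent_finite rat_independent_def) blast

lemma (in vector_space) independent_if_card_le_independent_in_span: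
  assumes "finite X" "independent W" "W \<subseteq> span X" "card X \<le> card W"
  shows "independent X"
proof -
  obtain B where B: "B \<subseteq> X" "independent B" "X \<subseteq> span B"
    by (rule maximal_independent_subset)
  have "W \<subseteq> span B" using assms(3) B(3) by (metis span_mono span_span subset_trans)
  hence "card W \<le> card B" using independent_span_bound[OF _ assms(2)] B(1) assms(1) finite_subset by blast
  hence "B = X" using card_subset_eq[OF assms(1) B(1)] card_mono[OF assms(1) B(1)] assms(4) by linarith
  with B(2) show ?thesis by simp
qed

lemma subfield_add: "is_subfield S \<Longrightarrow> x \<in> S \<Longrightarrow> y \<in> S \<Longrightarrow> x + y \<in> S"
  and subfield_diff: "is_subfield S \<Longrightarrow> x \<in> S \<Longrightarrow> y \<in> S \<Longrightarrow> x - y \<in> S"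
  and subfield_mult: "is_subfield S \<Longrightarrow> x \<in> S \<Longrightarrow> y \<in> S \<Longrightarrow> x * y \<in> S"
  and subfield_inverse: "is_subfield S \<Longrightarrow> x \<in> S \<Longrightarrow> inverse x \<in> S"
  unfolding is_subfield_def by auto

lemma subfield_of_rat:
  assumes S: "is_subfield S" shows "of_rat r \<in> S"
proof -
  have nat: "of_nat n \<in> S" for n
    by (induction n) (use S in \<open>auto simp: is_subfield_def\<close>)
  have int: "of_int z \<in> S" for z
    by (cases z rule: int_diff_cases) (simp add: subfield_diff[OF S] nat)
  obtain a b where "r = of_int a / of_int b" by (metis quotient_of_div surj_pair)
  hence "of_rat r = (of_int a :: complex) * inverse (of_int b)"
    by (simp add: of_rat_divide of_rat_mult of_rat_inverse divide_inverse)
  thus ?thesis using S int by (simp add: subfield_mult subfield_inverse)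
qed

lemma subfield_Re_Im:
  assumes S: "is_subfield S" and "z \<in> S" "cnj z \<in> S"
  shows "complex_of_real (Re z) \<in> S" "\<i> * complex_of_real (Im z) \<in> S"
proof -
  have half: "of_rat (1 / 2) \<in> S" by (rule subfield_of_rat[OF S])
  have "complex_of_real (Re z) = (z + cnj z) * of_rat (1 / 2)"
    by (simp add: complex_add_cnj of_rat_divide)
  thus "complex_of_real (Re z) \<in> S" using assms half by (simp add: subfield_add subfield_mult)
  have "\<i> * complex_of_real (Im z) = (z - cnj z) * of_rat (1 / 2)"
    by (simp add: complex_diff_cnj of_rat_divide)
  thus "\<i> * complex_of_real (Im z) \<in> S" using assms half by (simp add: subfield_diff subfield_mult)
qed

lemma subfield_power_int: "is_subfield S \<Longrightarrow> a \<in> S \<Longrightarrow> a powi t \<in> S"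
proof -
  assume S: "is_subfield S" and a: "a \<in> S"
  have pow: "a ^ n \<in> S" for n
    by (induction n) (use S a in \<open>auto simp: subfield_mult is_subfield_def\<close>)
  show ?thesis
    using pow[of "nat t"] pow[of "nat (- t)"] subfield_inverse[OF S]
    by (cases "t \<ge> 0") (auto simp: power_int_def power_inverse)
qed

lemma is_subfield_rat_adjoin: "is_subfield (rat_adjoin a)"
  unfolding rat_adjoin_def is_subfield_def by auto

lemma mem_rat_adjoin: "a \<in> rat_adjoin a"
  unfolding rat_adjoin_def by auto

interpretation of_rat_poly_hom: map_poly_inj_idom_hom "of_rat :: rat \<Rightarrow> complex" ..

definition rat_ring_adjoin :: "complex \<Rightarrow> complex set" where
  "rat_ring_adjoin a = range (\<lambda>p. poly (map_poly of_rat p) a)"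

lemma power_mem_rat_ring_adjoin: "a ^ j \<in> rat_ring_adjoin a"
  unfolding rat_ring_adjoin_def
  by (rule range_eqI[of _ _ "monom 1 j"]) (simp add: of_rat_hom.map_poly_hom_monom poly_monom)

lemma rat_ring_adjoin_subset:
  assumes S: "is_subfield S" and a: "a \<in> S"
  shows "rat_ring_adjoin a \<subseteq> S"
proof -
  have "poly (map_poly of_rat p) a \<in> S" for p
  proof (induction p rule: pCons_induct)
    case 0 show ?case using S by (simp add: is_subfield_def)
  next
    case (pCons c p)
    have "poly (map_poly of_rat (pCons c p)) a = of_rat c + a * poly (map_poly of_rat p) a"
      by (simp add: of_rat_hom.map_poly_pCons_hom)
    thus ?case using pCons.IH subfield_of_rat[OF S] a by (simp add: subfield_add[OF S] subfield_mult[OF S])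
  qed
  thus ?thesis unfolding rat_ring_adjoin_def by blast
qed

lemma rat_ring_adjoin_closed:
  assumes "x \<in> rat_ring_adjoin a" "y \<in> rat_ring_adjoin a"
  shows "x + y \<in> rat_ring_adjoin a" "x - y \<in> rat_ring_adjoin a" "x * y \<in> rat_ring_adjoin a"
    "of_rat c * x \<in> rat_ring_adjoin a"
proof -
  obtain p q where x: "x = poly (map_poly of_rat p) a" and y: "y = poly (map_poly of_rat q) a"
    using assms unfolding rat_ring_adjoin_def by blast
  show "x + y \<in> rat_ring_adjoin a" unfolding rat_ring_adjoin_def x y
    by (rule range_eqI[of _ _ "p + q"]) (simp add: hom_distribs)
  show "x - y \<in> rat_ring_adjoin a" unfolding rat_ring_adjoin_def x y
    by (rule range_eqI[of _ _ "p - q"]) (simp add: hom_distribs)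
  show "x * y \<in> rat_ring_adjoin a" unfolding rat_ring_adjoin_def x y
    by (rule range_eqI[of _ _ "p * q"]) (simp add: hom_distribs)
  show "of_rat c * x \<in> rat_ring_adjoin a" unfolding rat_ring_adjoin_def x
    by (rule range_eqI[of _ _ "smult c p"]) (simp add: hom_distribs)
qed

lemma subspace_rat_ring_adjoin: "rat_vs.subspace (rat_ring_adjoin a)"
proof -
  have "of_rat 0 * a ^ 0 \<in> rat_ring_adjoin a"
    by (rule rat_ring_adjoin_closed(4)[OF power_mem_rat_ring_adjoin power_mem_rat_ring_adjoin])
  thus ?thesis unfolding rat_vs.subspace_def by (auto intro: rat_ring_adjoin_closed)
qed

locale rat_irreducible_root =
  fixes f :: "rat poly" and a :: complex
  assumes irreducible: "irreducible f"
    and root: "poly (map_poly of_rat f) a = 0"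
begin

lemma degree_pos: "degree f > 0"
  using irreducible by (auto simp: irreducible_def is_unit_iff_degree)

lemma inverse_exists:
  assumes "\<not> f dvd p"
  obtains q where "poly (map_poly of_rat q) a * poly (map_poly of_rat p) a = 1"
proof -
  have "coprime f p"
    using irreducible assms by (simp add: prime_elem_imp_coprime)
  obtain u v where "bezout_coefficients f p = (u, v)" by force
  hence "u * f + v * p = 1" using bezout_coefficients \<open>coprime f p\<close> by fastforce
  hence "poly (map_poly of_rat (u * f + v * p)) a = 1" by simp
  with root have "poly (map_poly of_rat v) a * poly (map_poly of_rat p) a = 1" by (simp add: hom_distribs)
  thus ?thesis by (rule that)
qed

lemma dvd_if_root: "poly (map_poly of_rat p) a = 0 \<Longrightarrow> f dvd p"
  using inverse_exists by (metis mult_zero_right zero_neq_one)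

lemma eq_0_if_root_degree_less:
  assumes "poly (map_poly of_rat p) a = 0" "degree p < degree f"
  shows "p = 0"
proof (rule ccontr)
  assume "p \<noteq> 0"
  with dvd_if_root[OF assms(1)] have "degree f \<le> degree p" by (rule dvd_imp_degree_le)
  with assms(2) show False by simp
qed

lemma is_subfield_rat_ring_adjoin: "is_subfield (rat_ring_adjoin a)"
  unfolding is_subfield_def
proof (intro conjI ballI impI)
  show "0 \<in> rat_ring_adjoin a" by (rule rat_vs.subspace_0[OF subspace_rat_ring_adjoin])
  show "1 \<in> rat_ring_adjoin a" using power_mem_rat_ring_adjoin[of a 0] by simp
  fix x y assume "x \<in> rat_ring_adjoin a" "y \<in> rat_ring_adjoin a"
  thus "x + y \<in> rat_ring_adjoin a" "x - y \<in> rat_ring_adjoin a" "x * y \<in> rat_ring_adjoin a"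
    by (simp_all add: rat_ring_adjoin_closed)
next
  fix x assume "x \<in> rat_ring_adjoin a" "x \<noteq> 0"
  then obtain p where x: "x = poly (map_poly of_rat p) a" unfolding rat_ring_adjoin_def by blast
  have "\<not> f dvd p" using \<open>x \<noteq> 0\<close> root by (auto simp: x hom_distribs elim!: dvdE)
  then obtain q where "poly (map_poly of_rat q) a * x = 1" unfolding x by (rule inverse_exists)
  hence "inverse x = poly (map_poly of_rat q) a" by (simp add: inverse_unique mult.commute)
  thus "inverse x \<in> rat_ring_adjoin a" unfolding rat_ring_adjoin_def by simp
qed

lemma rat_adjoin_eq_rat_ring_adjoin: "rat_adjoin a = rat_ring_adjoin a"
proof
  have "a \<in> rat_ring_adjoin a" using power_mem_rat_ring_adjoin[of a 1] by simp
  thus "rat_adjoin a \<subseteq> rat_ring_adjoin a"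
    unfolding rat_adjoin_def using is_subfield_rat_ring_adjoin by blast
  show "rat_ring_adjoin a \<subseteq> rat_adjoin a"
    by (rule rat_ring_adjoin_subset[OF is_subfield_rat_adjoin mem_rat_adjoin])
qed

lemma inj_on_power: "inj_on ((^) a) {..<degree f}"
proof
  fix i j assume ij: "i \<in> {..<degree f}" "j \<in> {..<degree f}" "a ^ i = a ^ j"
  have "poly (map_poly of_rat (monom 1 i - monom 1 j)) a = 0"
    using ij(3) by (simp add: hom_distribs of_rat_hom.map_poly_hom_monom poly_monom)
  moreover have "degree (monom (1 :: rat) i - monom 1 j) < degree f"
    using degree_diff_le_max[of "monom (1 :: rat) i" "monom 1 j"] ij(1,2) by (simp add: degree_monom_eq)
  ultimately have "monom (1 :: rat) i - monom 1 j = 0" by (rule eq_0_if_root_degree_less)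
  hence "coeff (monom (1 :: rat) i) i = coeff (monom 1 j) i" by simp
  thus "i = j" by (simp split: if_splits)
qed

lemma card_powers: "card ((^) a ` {..<degree f}) = degree f"
  using card_image[OF inj_on_power] by simp

lemma independent_powers: "rat_vs.independent ((^) a ` {..<degree f})"
proof
  assume "rat_vs.dependent ((^) a ` {..<degree f})"
  then obtain u where u: "\<exists>v\<in>(^) a ` {..<degree f}. u v \<noteq> 0"
      "(\<Sum>v\<in>(^) a ` {..<degree f}. of_rat (u v) * v) = 0"
    using rat_vs.dependent_finite by auto
  define p where "p = (\<Sum>j<degree f. monom (u (a ^ j)) j)"
  have "poly (map_poly of_rat p) a = (\<Sum>j<degree f. of_rat (u (a ^ j)) * a ^ j)"
    by (simp add: p_def hom_distribs of_rat_hom.map_poly_hom_monom poly_monom poly_sum)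
  also have "\<dots> = 0" using u(2) by (simp add: sum.reindex[OF inj_on_power])
  finally have "poly (map_poly of_rat p) a = 0" .
  moreover have "degree p \<le> degree f - 1"
    unfolding p_def by (rule degree_sum_le) (auto intro: order.trans[OF degree_monom_le])
  hence "degree p < degree f" using degree_pos by linarith
  ultimately have "p = 0" by (rule eq_0_if_root_degree_less)
  moreover obtain j where "j < degree f" "u (a ^ j) \<noteq> 0" using u(1) by auto
  moreover have "coeff p j = u (a ^ j)"
    using \<open>j < degree f\<close> by (simp add: p_def coeff_sum coeff_monom sum.delta)
  ultimately show False by simp
qed

lemma span_powers: "rat_vs.span ((^) a ` {..<degree f}) = rat_ring_adjoin a"
proof
  show "rat_vs.span ((^) a ` {..<degree f}) \<subseteq> rat_ring_adjoin a"
    using power_mem_rat_ring_adjoin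
    by (intro rat_vs.span_minimal subspace_rat_ring_adjoin) auto
  show "rat_ring_adjoin a \<subseteq> rat_vs.span ((^) a ` {..<degree f})"
  proof
    fix x assume "x \<in> rat_ring_adjoin a"
    then obtain p where x: "x = poly (map_poly of_rat p) a" unfolding rat_ring_adjoin_def by blast
    define r where "r = p mod f"
    have "degree r < degree f"
      using degree_pos degree_mod_less'[of f p] irreducible by (cases "r = 0") (auto simp: r_def)
    have "x = poly (map_poly of_rat (f * (p div f) + r)) a" by (simp add: x r_def)
    also have "\<dots> = poly (map_poly of_rat r) a"
      using root by (simp add: of_rat_poly_hom.hom_add of_rat_poly_hom.hom_mult)
    also have "\<dots> = (\<Sum>i\<le>degree r. of_rat (coeff r i) * a ^ i)"
      by (simp add: poly_altdef of_rat_hom.degree_map_poly_hom coeff_map_poly)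
    also have "\<dots> \<in> rat_vs.span ((^) a ` {..<degree f})"
      using \<open>degree r < degree f\<close>
      by (intro rat_vs.span_sum rat_vs.span_scale rat_vs.span_base) auto
    finally show "x \<in> rat_vs.span ((^) a ` {..<degree f})" .
  qed
qed

end

lemma omega_eq_cis: "omega n = cis (2 * pi / n)"
  by (simp add: omega_def cis_conv_exp mult.commute)

lemma omega_powi_eq_cis: "omega n powi t = cis (2 * pi * of_int t / of_nat n)"
  by (simp add: omega_eq_cis cis_power_int algebra_simps)

lemma cnj_omega_powi: "cnj (omega n powi t) = omega n powi (- t)"
  by (simp add: omega_powi_eq_cis cis_cnj)

lemma omega_powi_diff: "omega n powi (s - t) = omega n powi s * cnj (omega n powi t)"
  by (simp add: omega_powi_eq_cis cis_cnj cis_mult algebra_simps diff_divide_distrib)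

lemma omega_pow_self: "n > 0 \<Longrightarrow> omega n ^ n = 1"
  by (simp add: omega_eq_cis DeMoivre)

lemma omega_pow_half: "m > 0 \<Longrightarrow> omega (2 * m) ^ m = -1"
  by (simp add: omega_eq_cis DeMoivre)

lemma omega_powi_mod:
  assumes "n > 0" shows "omega n powi (t mod int n) = omega n powi t"
proof -
  have "omega n \<noteq> 0" by (simp add: omega_def)
  have "omega n powi t = omega n powi (t mod int n + int n * (t div int n))" by simp
  also have "\<dots> = omega n powi (t mod int n) * (omega n powi int n) powi (t div int n)"
    using \<open>omega n \<noteq> 0\<close> by (simp only: power_int_add power_int_mult simp_thms)
  also have "\<dots> = omega n powi (t mod int n)" using omega_pow_self[OF assms] by simp
  finally show ?thesis by (rule sym)
qed

lemma omega_powi_reflect_full: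
  "n > 0 \<Longrightarrow> omega n powi (int n - t) = cnj (omega n powi t)"
  using omega_powi_diff[of n "int n" t] omega_pow_self[of n] by simp

lemma omega_powi_reflect_half:
  "m > 0 \<Longrightarrow> omega (2 * m) powi (int m - t) = - cnj (omega (2 * m) powi t)"
  using omega_powi_diff[of "2 * m" "int m" t] omega_pow_half[of m] by simp

lemma omega_powi_reduce:
  fixes m :: nat and t :: int
  assumes "m > 0"
  obtains r :: int where "0 \<le> r" "2 * r \<le> int m"
    "\<bar>Re (omega (2 * m) powi t)\<bar> = \<bar>Re (omega (2 * m) powi r)\<bar>"
    "\<bar>Im (omega (2 * m) powi t)\<bar> = \<bar>Im (omega (2 * m) powi r)\<bar>"
proof -
  let ?z = "\<lambda>t. omega (2 * m) powi t"
  obtain s where s: "0 \<le> s" "s \<le> int m" "\<bar>Re (?z t)\<bar> = \<bar>Re (?z s)\<bar>" "\<bar>Im (?z t)\<bar> = \<bar>Im (?z s)\<bar>"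
  proof (cases "t mod (2 * int m) \<le> int m")
    case True
    thus ?thesis using that[of "t mod (2 * int m)"] omega_powi_mod[of "2 * m" t] assms by simp
  next
    case False
    have "?z (t mod (2 * int m)) = ?z t" using omega_powi_mod[of "2 * m" t] assms by simp
    moreover have "?z (2 * int m - t mod (2 * int m)) = cnj (?z (t mod (2 * int m)))"
      using omega_powi_reflect_full[of "2 * m" "t mod (2 * int m)"] assms by simp
    ultimately have "?z (2 * int m - t mod (2 * int m)) = cnj (?z t)" by simp
    moreover have "t mod (2 * int m) < 2 * int m" using assms by simp
    ultimately show ?thesis using that[of "2 * int m - t mod (2 * int m)"] False
      by (simp del: complex_cnj_power_int)
  qed
  show ?thesis
  proof (cases "2 * s \<le> int m")
    case True thus ?thesis using that s by blast
  next
    case False thus ?thesis using that[of "int m - s"] s omega_powi_reflect_half[OF assms, of s]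
      by (simp del: complex_cnj_power_int)
  qed
qed

lemma two_pow_eq_double:
  "k \<ge> 1 \<Longrightarrow> (2 :: 'a :: {monoid_mult, numeral}) ^ k = 2 * 2 ^ (k - 1)"
  by (simp add: power_eq_if[of 2 k])

lemma Re_omega_powi_cases:
  fixes t :: int
  assumes k: "k \<ge> 1"
  defines "x \<equiv> complex_of_real (Re (omega (2 ^ k) powi t))"
  shows "x \<in> A_set k \<or> - x \<in> A_set k \<or> x = 0"
proof -
  define m :: nat where "m = 2 ^ (k - 1)"
  have n: "omega (2 ^ k) = omega (2 * m)" "(2 :: int) ^ k = 2 * int m"
    using two_pow_eq_double[OF k, where 'a = nat] two_pow_eq_double[OF k, where 'a = int]
    by (simp_all add: m_def)
  obtain r where r: "0 \<le> r" "2 * r \<le> int m" "\<bar>Re (omega (2 * m) powi t)\<bar> = \<bar>Re (omega (2 * m) powi r)\<bar>"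
    using omega_powi_reduce[of m t] by (auto simp: m_def)
  show ?thesis
  proof (cases "2 * r = int m")
    case True
    hence "int m - r = r" by simp
    hence "omega (2 * m) powi r = - cnj (omega (2 * m) powi r)"
      using omega_powi_reflect_half[of m r] by (simp add: m_def)
    hence "Re (omega (2 * m) powi r) = 0" by (simp add: complex_eq_iff del: complex_cnj_power_int)
    thus ?thesis using r(3) by (simp add: x_def n)
  next
    case False
    hence "complex_of_real (Re (omega (2 ^ k) powi r)) \<in> A_set k"
      using r(1,2) False unfolding A_set_def n by (auto simp: m_def intro!: exI[of _ r])
    thus ?thesis using r(3) by (auto simp: x_def n abs_eq_iff)
  qed
qed

lemma Im_omega_powi_cases:
  fixes t :: int
  assumes k: "k \<ge> 1"
  defines "y \<equiv> \<i> * complex_of_real (Im (omega (2 ^ k) powi t))"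
  shows "y \<in> B_set k \<or> - y \<in> B_set k \<or> y = 0"
proof -
  define m :: nat where "m = 2 ^ (k - 1)"
  have n: "omega (2 ^ k) = omega (2 * m)" "(2 :: int) ^ k = 2 * int m"
    using two_pow_eq_double[OF k, where 'a = nat] two_pow_eq_double[OF k, where 'a = int]
    by (simp_all add: m_def)
  obtain r where r: "0 \<le> r" "2 * r \<le> int m" "\<bar>Im (omega (2 * m) powi t)\<bar> = \<bar>Im (omega (2 * m) powi r)\<bar>"
    using omega_powi_reduce[of m t] by (auto simp: m_def)
  show ?thesis
  proof (cases "r = 0")
    case True thus ?thesis using r(3) by (simp add: y_def n)
  next
    case False
    hence "\<i> * complex_of_real (Im (omega (2 ^ k) powi r)) \<in> B_set k"
      using r(1,2) unfolding B_set_def n by (auto simp: m_def intro!: exI[of _ r])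
    thus ?thesis using r(3) by (auto simp: y_def n abs_eq_iff)
  qed
qed

lemma signed_member_coords:
  assumes "finite X" and "y \<in> X \<or> - y \<in> X \<or> y = 0"
  shows "\<exists>c :: complex \<Rightarrow> rat. (\<forall>x\<in>X. c x \<in> {-1, 0, 1}) \<and> y = (\<Sum>x\<in>X. of_rat (c x) * x)"
proof -
  have unit: "of_rat s * x0 = (\<Sum>x\<in>X. of_rat (if x = x0 then s else 0) * x)" if "x0 \<in> X" for x0 s
  proof -
    have "(\<Sum>x\<in>X. of_rat (if x = x0 then s else 0) * x) = (\<Sum>x\<in>X. if x = x0 then of_rat s * x0 else 0)"
      by (rule sum.cong) auto
    thus ?thesis using assms(1) that by simp
  qed
  from assms(2) show ?thesis
  proof (elim disjE)
    assume "y \<in> X"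
    thus ?thesis using unit[of y 1] by (intro exI[of _ "\<lambda>x. if x = y then 1 else 0"]) auto
  next
    assume "- y \<in> X"
    thus ?thesis using unit[of "- y" "- 1"] by (intro exI[of _ "\<lambda>x. if x = - y then - 1 else 0"]) auto
  qed (intro exI[of _ "\<lambda>_. 0"], simp)
qed

lemma card_half_intervals_le:
  fixes m :: int
  shows "card {t. 0 \<le> t \<and> 2 * t < m} + card {t. 0 < t \<and> 2 * t \<le> m} \<le> nat m"
proof -
  let ?A = "{t. 0 \<le> t \<and> 2 * t < m}" and ?B = "{t. 0 < t \<and> 2 * t \<le> m}"
  have fin: "finite ?A" "finite ?B"
    by (rule finite_subset[of _ "{0..m}"], auto)+
  have "card ?A + card ?B = card (?A \<union> (\<lambda>t. m - t) ` ?B)"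
    using fin by (subst card_Un_disjoint) (auto simp: card_image inj_on_def)
  also have "\<dots> \<le> card {0..<m}" by (intro card_mono) auto
  finally show ?thesis by simp
qed

lemma finite_A_B: "finite (A_set k \<union> B_set k)"
proof -
  have "A_set k \<union> B_set k \<subseteq> (\<lambda>t. complex_of_real (Re (omega (2 ^ k) powi t))) ` {0..2 ^ k}
      \<union> (\<lambda>t. \<i> * complex_of_real (Im (omega (2 ^ k) powi t))) ` {0..2 ^ k}"
    by (auto simp: A_set_def B_set_def)
  thus ?thesis by (rule finite_subset) simp
qed

lemma card_A_B_le:
  assumes "k \<ge> 1" shows "card (A_set k \<union> B_set k) \<le> 2 ^ (k - 1)"
proof -
  let ?m = "(2 :: int) ^ (k - 1)"
  have A: "A_set k = (\<lambda>t. complex_of_real (Re (omega (2 ^ k) powi t))) ` {t. 0 \<le> t \<and> 2 * t < ?m}"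
   and B: "B_set k = (\<lambda>t. \<i> * complex_of_real (Im (omega (2 ^ k) powi t))) ` {t. 0 < t \<and> 2 * t \<le> ?m}"
    using two_pow_eq_double[OF assms, where 'a = int] by (auto simp: A_set_def B_set_def)
  have "card (A_set k \<union> B_set k) \<le> card (A_set k) + card (B_set k)" by (rule card_Un_le)
  also have "\<dots> \<le> card {t. 0 \<le> t \<and> 2 * t < ?m} + card {t. 0 < t \<and> 2 * t \<le> ?m}"
    unfolding A B by (intro add_mono card_image_le) (auto intro: finite_subset[of _ "{0..?m}"])
  also have "\<dots> \<le> nat ?m" by (rule card_half_intervals_le)
  finally show ?thesis by (simp add: nat_power_eq)
qed

lemma A_B_subset_rat_adjoin: "A_set k \<union> B_set k \<subseteq> rat_adjoin (omega (2 ^ k))"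
proof -
  let ?S = "rat_adjoin (omega (2 ^ k))"
  have "omega (2 ^ k) powi t \<in> ?S" for t
    by (rule subfield_power_int[OF is_subfield_rat_adjoin mem_rat_adjoin])
  hence "complex_of_real (Re (omega (2 ^ k) powi t)) \<in> ?S" "\<i> * complex_of_real (Im (omega (2 ^ k) powi t)) \<in> ?S"
    for t using subfield_Re_Im[OF is_subfield_rat_adjoin] cnj_omega_powi by metis+
  thus ?thesis unfolding A_set_def B_set_def by blast
qed

lemma Re_omega_powi_coords:
  fixes t :: int
  assumes "k \<ge> 1"
  shows "\<exists>c :: complex \<Rightarrow> rat. (\<forall>x\<in>A_set k \<union> B_set k. c x \<in> {-1, 0, 1}) \<and>
    complex_of_real (Re (omega (2 ^ k) powi t)) = (\<Sum>x\<in>A_set k \<union> B_set k. of_rat (c x) * x)"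
  using Re_omega_powi_cases[OF assms, of t] by (intro signed_member_coords finite_A_B) auto

lemma Im_omega_powi_coords:
  fixes t :: int
  assumes "k \<ge> 1"
  shows "\<exists>c :: complex \<Rightarrow> rat. (\<forall>x\<in>A_set k \<union> B_set k. c x \<in> {-1, 0, 1}) \<and>
    \<i> * complex_of_real (Im (omega (2 ^ k) powi t)) = (\<Sum>x\<in>A_set k \<union> B_set k. of_rat (c x) * x)"
  using Im_omega_powi_cases[OF assms, of t] by (intro signed_member_coords finite_A_B) auto

lemma omega_pow_in_span_A_B:
  assumes "k \<ge> 1"
  shows "omega (2 ^ k) ^ j \<in> rat_vs.span (A_set k \<union> B_set k)"
proof -
  have "omega (2 ^ k) ^ j = complex_of_real (Re (omega (2 ^ k) powi int j))
      + \<i> * complex_of_real (Im (omega (2 ^ k) powi int j))"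
    by (simp add: complex_eq)
  moreover have "complex_of_real (Re (omega (2 ^ k) powi int j)) \<in> rat_span (A_set k \<union> B_set k)"
    "\<i> * complex_of_real (Im (omega (2 ^ k) powi int j)) \<in> rat_span (A_set k \<union> B_set k)"
    using Re_omega_powi_coords[OF assms] Im_omega_powi_coords[OF assms] unfolding rat_span_def by blast+
  ultimately show ?thesis unfolding rat_span_eq_span[OF finite_A_B] by (metis rat_vs.span_add)
qed

lemma rat_basis_A_B:
  assumes k: "k \<ge> 1"
  shows "rat_basis_of (A_set k \<union> B_set k) (rat_adjoin (omega (2 ^ k)))"
proof -
  define m :: nat where "m = 2 ^ (k - 1)"
  let ?X = "A_set k \<union> B_set k" and ?W = "(^) (omega (2 ^ k)) ` {..<m}"
  have "omega (2 ^ k) ^ m = -1"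
    using two_pow_eq_double[OF k, where 'a = nat] omega_pow_half[of m] by (simp add: m_def)
  then interpret rat_irreducible_root "monom 1 m + 1" "omega (2 ^ k)"
    by unfold_locales
      (simp_all add: m_def irreducible_X_pow2_plus_1 hom_distribs of_rat_hom.map_poly_hom_monom poly_monom)
  have "degree (monom 1 m + 1 :: rat poly) = m" by (simp add: degree_add_eq_left degree_monom_eq m_def)
  note powers = independent_powers[unfolded this] card_powers[unfolded this] span_powers[unfolded this]
  have W_span: "rat_vs.span ?W = rat_adjoin (omega (2 ^ k))"
    using powers(3) rat_adjoin_eq_rat_ring_adjoin by simp
  have "?W \<subseteq> rat_vs.span ?X" using omega_pow_in_span_A_B[OF k] by auto
  hence "rat_adjoin (omega (2 ^ k)) \<subseteq> rat_vs.span ?X"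
    unfolding W_span[symmetric] by (intro rat_vs.span_minimal rat_vs.subspace_span)
  moreover have "rat_vs.span ?X \<subseteq> rat_adjoin (omega (2 ^ k))"
    unfolding W_span[symmetric] using A_B_subset_rat_adjoin[of k] W_span
    by (intro rat_vs.span_minimal rat_vs.subspace_span) simp
  ultimately have X_span: "rat_vs.span ?X = rat_adjoin (omega (2 ^ k))" by blast
  have "rat_vs.independent ?X"
    using powers(1,2) card_A_B_le[OF k] \<open>?W \<subseteq> rat_vs.span ?X\<close>
    by (intro rat_vs.independent_if_card_le_independent_in_span[OF finite_A_B]) (auto simp: m_def)
  with X_span show ?thesis
    unfolding rat_basis_of_def rat_span_eq_span[OF finite_A_B] rat_independent_iff_independent[OF finite_A_B]
    using finite_A_B A_B_subset_rat_adjoin by blast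
qed

theorem lemma8:
  fixes k :: nat
  assumes "k \<ge> 1"
  shows "rat_basis_of (A_set k \<union> B_set k) (rat_adjoin (omega (2^k))) \<and>
    (\<forall>t :: int.
      (\<exists>c :: complex \<Rightarrow> rat. (\<forall>x\<in>A_set k \<union> B_set k. c x \<in> {-1, 0, 1}) \<and>
          complex_of_real (Re (omega (2^k) powi t)) = (\<Sum>x\<in>A_set k \<union> B_set k. of_rat (c x) * x)) \<and>
      (\<exists>c :: complex \<Rightarrow> rat. (\<forall>x\<in>A_set k \<union> B_set k. c x \<in> {-1, 0, 1}) \<and>
          \<i> * complex_of_real (Im (omega (2^k) powi t)) = (\<Sum>x\<in>A_set k \<union> B_set k. of_rat (c x) * x)))"
  by (intro conjI allI rat_basis_A_B[OF assms] Re_omega_powi_coords[OF assms] Im_omega_powi_coords[OF assms])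

end
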